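(* Let $F\in\Gamma_0^s(\mathbb{R}_+)$ and $a\in(0,1)$. Suppose that $\hat F^a$ is a metric on $[0,+\infty)$ and that $T_a(F)=F$. Then there is $c\in(0,+\infty)$ such that $F(s)=c|s^a-1|^{1/a}$ for all $s\ge0$.
   Context: $\Gamma_0(\mathbb{R}_+)$ is the set of functions $F:[0,\infty)\to[0,\infty]$ that are convex, lower semicontinuous, with $F(1)=0$. For $F\in\Gamma_0(\mathbb{R}_+)$: $\mathrm{rec}(F)(r)=\lim_{\alpha\to\infty}F(1+\alpha r)/\alpha$, $F'_\infty:=\mathrm{rec}(F)(1)$; the perspective function is $\hat F(r,t)=tF(r/t)$ for $t>0$, $\hat F(r,0)=\mathrm{rec}(F)(r)$; the reverse entropy is $R(s)=sF(1/s)$ for $s>0$, $R(0)=F'_\infty$. $\Gamma_0^s(\mathbb{R}_+)$ is the set of $F\in\Gamma_0(\mathbb{R}_+)$ with $F=R$; for such $F$, $\hat F$ is symmetric and $\hat F(1,t)=F(t)$. The marginal perspective function $H_F$ is the lower semicontinuous envelope of $\tilde H_F(r_1,r_2)=\inf_{\theta>0}[\hat F(\theta,r_1)+\hat F(\theta,r_2)]$. For $a\in(0,1]$, $T_a(F)(s)=2^{1/a-1}H_F(1,s)$. A metric on $[0,\infty)$ is a finite-valued function $D:[0,\infty)^2\to[0,\infty)$ with $D(x,y)=0\iff x=y$, symmetric, satisfying the triangle inequality. *)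

theory Defs
  imports "HOL-Analysis.Analysis"
begin

text \<open>Functions F : [0,\<infinity>) \<rightarrow> [0,\<infinity>] are modelled as real \<Rightarrow> ereal; only values on
  {0..} matter.\<close>

definition convex_ext_on :: "real set \<Rightarrow> (real \<Rightarrow> ereal) \<Rightarrow> bool" where
  "convex_ext_on S F \<longleftrightarrow> (\<forall>x\<in>S. \<forall>y\<in>S. \<forall>t::real. 0 \<le> t \<and> t \<le> 1 \<longrightarrow>
      F ((1 - t) * x + t * y) \<le> ereal (1 - t) * F x + ereal t * F y)"

definition lsc_ext_on :: "real set \<Rightarrow> (real \<Rightarrow> ereal) \<Rightarrow> bool" where
  "lsc_ext_on S F \<longleftrightarrow> (\<forall>x\<in>S. F x \<le> Liminf (at x within S) F)"

definition Gamma0 :: "(real \<Rightarrow> ereal) set" where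
  "Gamma0 = {F. (\<forall>x\<ge>0. F x \<ge> 0) \<and> convex_ext_on {0..} F \<and> lsc_ext_on {0..} F \<and> F 1 = 0}"

definition recF :: "(real \<Rightarrow> ereal) \<Rightarrow> real \<Rightarrow> ereal" where
  "recF F r = Lim at_top (\<lambda>\<alpha>::real. F (1 + \<alpha> * r) / ereal \<alpha>)"

definition Finf :: "(real \<Rightarrow> ereal) \<Rightarrow> ereal" where
  "Finf F = recF F 1"

definition persp :: "(real \<Rightarrow> ereal) \<Rightarrow> real \<Rightarrow> real \<Rightarrow> ereal" where
  "persp F r t = (if t > 0 then ereal t * F (r / t) else recF F r)"

definition rev_entropy :: "(real \<Rightarrow> ereal) \<Rightarrow> real \<Rightarrow> ereal" where
  "rev_entropy F s = (if s > 0 then ereal s * F (1 / s) else Finf F)"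

definition Gamma0s :: "(real \<Rightarrow> ereal) set" where
  "Gamma0s = {F. F \<in> Gamma0 \<and> (\<forall>s\<ge>0. F s = rev_entropy F s)}"

definition tildeH :: "(real \<Rightarrow> ereal) \<Rightarrow> real \<Rightarrow> real \<Rightarrow> ereal" where
  "tildeH F r1 r2 = (INF \<theta>\<in>{0<..}. persp F \<theta> r1 + persp F \<theta> r2)"

text \<open>Lower semicontinuous envelope on [0,\<infinity>)^2 (closure of the epigraph):
  H(p) = sup over e>0 of inf of tildeH on the e-ball around p within the domain.\<close>
definition margH :: "(real \<Rightarrow> ereal) \<Rightarrow> real \<Rightarrow> real \<Rightarrow> ereal" where
  "margH F r1 r2 = (SUP e\<in>{0<..}. INF q\<in>{q. fst q \<ge> 0 \<and> snd q \<ge> 0 \<and> dist q (r1, r2) < e}.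
       tildeH F (fst q) (snd q))"

definition Ta :: "real \<Rightarrow> (real \<Rightarrow> ereal) \<Rightarrow> real \<Rightarrow> ereal" where
  "Ta a F s = ereal (2 powr (1 / a - 1)) * margH F 1 s"

definition metric_on_nonneg :: "(real \<Rightarrow> real \<Rightarrow> real) \<Rightarrow> bool" where
  "metric_on_nonneg D \<longleftrightarrow>
     (\<forall>x\<ge>0. \<forall>y\<ge>0. D x y \<ge> 0 \<and> (D x y = 0 \<longleftrightarrow> x = y) \<and> D x y = D y x) \<and>
     (\<forall>x\<ge>0. \<forall>y\<ge>0. \<forall>z\<ge>0. D x z \<le> D x y + D y z)"

definition persp_pow_metric :: "(real \<Rightarrow> ereal) \<Rightarrow> real \<Rightarrow> bool" where
  "persp_pow_metric F a \<longleftrightarrow>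
     (\<forall>x\<ge>0. \<forall>y\<ge>0. \<bar>persp F x y\<bar> \<noteq> \<infinity>) \<and>
     metric_on_nonneg (\<lambda>x y. (real_of_ereal (persp F x y)) powr a)"

end

theory Submission
  imports Defs
begin

text \<open>Write \<open>D\<close> for the perspective \<open>hat F\<close> and \<open>d = D powr a\<close> for the metric. Since \<open>D\<close> is
  1-homogeneous, \<open>d\<close> is \<open>a\<close>-homogeneous, so \<open>d 0 t = t powr a * d 0 1\<close>. The fixed-point equation
  says that the infimum defining \<open>H_F(1, s)\<close> equals \<open>2 * (d 1 s / 2) powr (1/a)\<close>. As
  \<open>x powr p + y powr p \<ge> 2 * ((x + y) / 2) powr p\<close> for \<open>p = 1/a > 1\<close>, with equality only
  for \<open>x = y\<close>, a nearly optimal \<open>\<theta>\<close> in that infimum is an approximate \<open>d\<close>-midpoint of \<open>1\<close>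
  and \<open>s\<close>; by homogeneity approximate midpoints exist between any two points. Bisection then
  shows \<open>d 0 t + d t 1 = d 0 1\<close> for all \<open>t \<in> {0..1}\<close>, hence \<open>d t 1 = d 0 1 * (1 - t powr a)\<close>,
  and homogeneity gives \<open>d s 1 = d 0 1 * \<bar>s powr a - 1\<bar>\<close> for all \<open>s \<ge> 0\<close>. Finally
  \<open>F s = D s 1 = d s 1 powr (1/a)\<close>.\<close>

section \<open>Power means\<close>

lemma powr_diff_mvt:
  fixes p u v :: real
  assumes "0 < p" "0 \<le> u" "u < v"
  obtains z where "u < z" "z < v" "v powr p - u powr p = (v - u) * (p * z powr (p - 1))"
proof -
  have "continuous_on {u..v} (\<lambda>t. t powr p)"
    by (rule continuous_on_powr') (use assms in \<open>auto intro!: continuous_intros\<close>)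
  moreover have "(\<lambda>t. t powr p) differentiable (at x)" if "u < x" "x < v" for x
    using that assms has_real_derivative_powr[of x p] real_differentiable_def by force
  ultimately obtain l z where z: "u < z" "z < v" "DERIV (\<lambda>t. t powr p) z :> l"
    "v powr p - u powr p = (v - u) * l"
    using MVT[OF assms(3)] by blast
  have "l = p * z powr (p - 1)"
    using DERIV_unique[OF z(3) has_real_derivative_powr] z assms by simp
  with z that show ?thesis by blast
qed

lemma powr_midpoint_less:
  fixes p x y :: real
  assumes "p > 1" "0 \<le> y" "y < x"
  shows "2 * ((x + y) / 2) powr p < x powr p + y powr p"
proof -
  define m where "m = (x + y) / 2"
  have m: "y < m" "m < x" "x - m = m - y" using assms by (auto simp: m_def field_simps)
  have "0 < p" using assms(1) by simp
  obtain z1 where z1: "m < z1" "x powr p - m powr p = (x - m) * (p * z1 powr (p - 1))"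
    using powr_diff_mvt[OF \<open>0 < p\<close> _ m(2)] m assms(2) by (metis order.strict_trans order_le_less)
  obtain z2 where z2: "y < z2" "z2 < m" "m powr p - y powr p = (m - y) * (p * z2 powr (p - 1))"
    using powr_diff_mvt[OF \<open>0 < p\<close> assms(2) m(1)] by blast
  have "z2 powr (p - 1) < z1 powr (p - 1)"
    using assms z1 z2 by (intro powr_less_mono2) auto
  then have "m powr p - y powr p < x powr p - m powr p"
    using z1(2) z2(3) m assms by (simp add: mult_strict_left_mono)
  then show ?thesis by (simp add: m_def)
qed

lemma powr_sum_le_midpoint_imp_eq:
  fixes p A x y :: real
  assumes "p > 1" "0 \<le> x" "0 \<le> y" "0 \<le> A" "A \<le> x + y"
    and "x powr p + y powr p \<le> 2 * (A / 2) powr p"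
  shows "x = A / 2 \<and> y = A / 2"
proof -
  have "2 * (A / 2) powr p \<le> 2 * ((x + y) / 2) powr p"
    using assms by (simp add: powr_mono2)
  then have "x = y"
    using powr_midpoint_less[OF assms(1,3), of x] powr_midpoint_less[OF assms(1,2), of y] assms(6)
    by (cases x y rule: linorder_cases) (auto simp: add.commute)
  moreover have "x \<le> A / 2"
    using assms \<open>x = y\<close> powr_less_mono2[of p "A / 2" x] by force
  ultimately show ?thesis using assms(5) by simp
qed

lemma compact_pos_lower_bound:
  fixes f :: "'a::metric_space \<Rightarrow> real"
  assumes "compact K" "continuous_on K f" "\<And>z. z \<in> K \<Longrightarrow> f z > 0"
  obtains \<delta> where "\<delta> > 0" "\<And>z. z \<in> K \<Longrightarrow> \<delta> \<le> f z"
proof (cases "K = {}")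
  case False
  then obtain z0 where "z0 \<in> K" "\<And>z. z \<in> K \<Longrightarrow> f z0 \<le> f z"
    using continuous_attains_inf[OF assms(1) _ assms(2)] by blast
  with assms(3) that show ?thesis by blast
qed (use that[of 1] in simp)

lemma powr_midpoint_stable:
  fixes p A \<epsilon> :: real
  assumes p: "p > 1" and A: "0 \<le> A" and \<epsilon>: "\<epsilon> > 0"
  obtains \<delta> where "\<delta> > 0"
    "\<And>x y. 0 \<le> x \<Longrightarrow> 0 \<le> y \<Longrightarrow> A - \<delta> \<le> x + y \<Longrightarrow>
       x powr p + y powr p \<le> 2 * (A / 2) powr p + \<delta> \<Longrightarrow> \<bar>x - A / 2\<bar> \<le> \<epsilon> \<and> \<bar>y - A / 2\<bar> \<le> \<epsilon>"
proof -
  define R where "R = (2 * (A / 2) powr p + 1) powr (1 / p)"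
  have bounded: "x \<le> R" if "0 \<le> x" "x powr p \<le> 2 * (A / 2) powr p + 1" for x
  proof -
    have "x = (x powr p) powr (1 / p)" using p that by (simp add: powr_powr)
    also have "\<dots> \<le> R" unfolding R_def using that p by (intro powr_mono2) auto
    finally show ?thesis .
  qed
  define K where "K = ({0..R} \<times> {0..R}) \<inter> {z. \<epsilon> \<le> \<bar>fst z - A / 2\<bar> \<or> \<epsilon> \<le> \<bar>snd z - A / 2\<bar>}"
  define \<Phi> where
    "\<Phi> z = max (A - (fst z + snd z)) (fst z powr p + snd z powr p - 2 * (A / 2) powr p)" for z
  have "compact K" unfolding K_def
    by (intro compact_Int_closed compact_Times compact_Icc)
      (simp add: Collect_disj_eq closed_Un closed_Collect_le continuous_intros)
  moreover have "continuous_on K \<Phi>"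
    unfolding \<Phi>_def K_def
    by (intro continuous_intros continuous_on_powr') (use p in auto)
  moreover have "\<Phi> z > 0" if "z \<in> K" for z
    using that powr_sum_le_midpoint_imp_eq[OF p _ _ A, of "fst z" "snd z"] \<epsilon>
    by (force simp: K_def \<Phi>_def)
  ultimately obtain \<eta> where \<eta>: "\<eta> > 0" "\<And>z. z \<in> K \<Longrightarrow> \<eta> \<le> \<Phi> z"
    using compact_pos_lower_bound[of K \<Phi>] by blast
  show ?thesis
  proof (rule that[of "min 1 (\<eta> / 2)"])
    fix x y :: real
    assume xy: "0 \<le> x" "0 \<le> y" "A - min 1 (\<eta> / 2) \<le> x + y"
      "x powr p + y powr p \<le> 2 * (A / 2) powr p + min 1 (\<eta> / 2)"
    have "x \<le> R" "y \<le> R"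
      using xy bounded powr_ge_zero[of x p] powr_ge_zero[of y p] by (smt (verit))+
    moreover have "\<Phi> (x, y) < \<eta>"
      using xy \<eta>(1) unfolding \<Phi>_def by (simp add: min_def split: if_splits)
    ultimately show "\<bar>x - A / 2\<bar> \<le> \<epsilon> \<and> \<bar>y - A / 2\<bar> \<le> \<epsilon>"
      using \<eta>(2)[of "(x, y)"] xy by (force simp: K_def)
  qed (use \<eta> in simp)
qed

section \<open>Homogeneous metrics on the half-line\<close>

definition approx_midpoints :: "(real \<Rightarrow> real \<Rightarrow> real) \<Rightarrow> real \<Rightarrow> real \<Rightarrow> bool" where
  "approx_midpoints d x y \<longleftrightarrow>
     (\<forall>\<epsilon>>0. \<exists>\<theta>\<ge>0. \<bar>d x \<theta> - d x y / 2\<bar> \<le> \<epsilon> \<and> \<bar>d \<theta> y - d x y / 2\<bar> \<le> \<epsilon>)"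

locale homogeneous_metric =
  fixes d :: "real \<Rightarrow> real \<Rightarrow> real" and a :: real
  assumes metric: "metric_on_nonneg d"
    and a_pos: "0 < a"
    and homogeneous: "\<And>l x y. 0 < l \<Longrightarrow> 0 \<le> x \<Longrightarrow> 0 \<le> y \<Longrightarrow> d (l * x) (l * y) = l powr a * d x y"
begin

lemma powr_inverse_powr [simp]: "0 \<le> u \<Longrightarrow> (u powr (1 / a)) powr a = u"
  and powr_powr_inverse [simp]: "0 \<le> t \<Longrightarrow> (t powr a) powr (1 / a) = t"
  using a_pos by (simp_all add: powr_powr)

lemma nonneg: "0 \<le> x \<Longrightarrow> 0 \<le> y \<Longrightarrow> 0 \<le> d x y"
  and eq_0_iff: "0 \<le> x \<Longrightarrow> 0 \<le> y \<Longrightarrow> d x y = 0 \<longleftrightarrow> x = y"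
  and commute: "0 \<le> x \<Longrightarrow> 0 \<le> y \<Longrightarrow> d x y = d y x"
  and triangle: "0 \<le> x \<Longrightarrow> 0 \<le> y \<Longrightarrow> 0 \<le> z \<Longrightarrow> d x z \<le> d x y + d y z"
  using metric unfolding metric_on_nonneg_def by blast+

lemma self [simp]: "0 \<le> x \<Longrightarrow> d x x = 0"
  using eq_0_iff by blast

lemma zero_one_pos: "0 < d 0 1"
  using nonneg[of 0 1] eq_0_iff[of 0 1] by simp

lemma zero_left: "0 \<le> y \<Longrightarrow> d 0 y = y powr a * d 0 1"
  using homogeneous[of y 0 1] by (cases "y = 0") auto

lemma approx_midpoints_commute:
  "0 \<le> x \<Longrightarrow> 0 \<le> y \<Longrightarrow> approx_midpoints d x y \<Longrightarrow> approx_midpoints d y x"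
  unfolding approx_midpoints_def by (smt (verit) commute)

lemma approx_midpoints_scale:
  assumes l: "0 < l" and "0 \<le> x" "0 \<le> y" and mid: "approx_midpoints d x y"
  shows "approx_midpoints d (l * x) (l * y)"
  unfolding approx_midpoints_def
proof (intro allI impI)
  fix \<epsilon> :: real assume "\<epsilon> > 0"
  then have "\<epsilon> / l powr a > 0" using l by simp
  then obtain \<theta> where \<theta>: "\<theta> \<ge> 0" "\<bar>d x \<theta> - d x y / 2\<bar> \<le> \<epsilon> / l powr a"
    "\<bar>d \<theta> y - d x y / 2\<bar> \<le> \<epsilon> / l powr a"
    using mid unfolding approx_midpoints_def by blast
  have scaled: "\<bar>l powr a * u - l powr a * v / 2\<bar> \<le> \<epsilon>" if "\<bar>u - v / 2\<bar> \<le> \<epsilon> / l powr a" for u v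
  proof -
    have "l powr a * u - l powr a * v / 2 = l powr a * (u - v / 2)"
      by (simp add: algebra_simps)
    then have "\<bar>l powr a * u - l powr a * v / 2\<bar> = l powr a * \<bar>u - v / 2\<bar>"
      by (simp add: abs_mult)
    with that l show ?thesis by (simp add: pos_le_divide_eq mult.commute)
  qed
  show "\<exists>\<theta>\<ge>0. \<bar>d (l * x) \<theta> - d (l * x) (l * y) / 2\<bar> \<le> \<epsilon> \<and>
      \<bar>d \<theta> (l * y) - d (l * x) (l * y) / 2\<bar> \<le> \<epsilon>"
    using \<theta> l assms(2,3) scaled by (intro exI[of _ "l * \<theta>"]) (simp add: homogeneous)
qed

lemma approx_midpoints_from_one:
  assumes one: "\<And>s. 0 \<le> s \<Longrightarrow> approx_midpoints d 1 s" and "0 \<le> x" "0 \<le> y"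
  shows "approx_midpoints d x y"
proof -
  have from_pos: "approx_midpoints d x y" if "0 < x" "0 \<le> y" for x y
    using approx_midpoints_scale[OF that(1), of 1 "y / x"] one[of "y / x"] that by simp
  consider "0 < x" | "x = 0" "0 < y" | "x = 0" "y = 0" using assms by linarith
  then show ?thesis
  proof cases
    case 1
    then show ?thesis using from_pos assms by blast
  next
    case 2
    then show ?thesis using from_pos[of y 0] approx_midpoints_commute[of y 0] by simp
  next
    case 3
    then show ?thesis unfolding approx_midpoints_def by (intro allI impI exI[of _ 0]) simp
  qed
qed

end

locale continuous_homogeneous_metric = homogeneous_metric +
  assumes continuous: "\<And>z. 0 < z \<Longrightarrow> ((\<lambda>w. d w z) \<longlongrightarrow> 0) (at z)"
begin

lemma tendsto_dist:
  assumes "0 \<le> z"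
  shows "((\<lambda>w. d w z) \<longlongrightarrow> 0) (at z within {0..})"
proof (cases "z = 0")
  case True
  have "((\<lambda>w. w powr a * d 0 1) \<longlongrightarrow> 0) (at 0 within {0..})"
    using a_pos by (intro tendsto_mult_left_zero tendsto_zero_powrI tendsto_ident_at tendsto_const)
      (auto simp: eventually_at_filter)
  moreover have "\<forall>\<^sub>F w in at 0 within {0..}. w powr a * d 0 1 = d w 0"
    unfolding eventually_at_filter
    by (intro always_eventually) (metis atLeast_iff commute order_refl zero_left)
  ultimately show ?thesis using True by (simp add: tendsto_cong)
next
  case False
  with assms have "0 < z" by simp
  then show ?thesis by (rule tendsto_within_subset[OF continuous]) simp
qed

lemma dist_small_near:
  assumes "0 \<le> z" "0 < \<zeta>"
  obtains e where "0 < e" "\<And>w. 0 \<le> w \<Longrightarrow> \<bar>w - z\<bar> < e \<Longrightarrow> d w z < \<zeta>"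
proof -
  obtain e where e: "0 < e" "\<And>w. w \<in> {0..} \<Longrightarrow> w \<noteq> z \<Longrightarrow> dist w z < e \<Longrightarrow> dist (d w z) 0 < \<zeta>"
    using tendsto_dist[OF assms(1)] assms(2) unfolding tendsto_iff eventually_at by blast
  show ?thesis
  proof (rule that[OF e(1)])
    fix w assume "0 \<le> w" "\<bar>w - z\<bar> < e"
    then show "d w z < \<zeta>"
      using e(2)[of w] assms nonneg[of w z] by (cases "w = z") (auto simp: dist_real_def)
  qed
qed

end

locale homogeneous_length_metric = continuous_homogeneous_metric +
  assumes midpoints: "\<And>x y. 0 \<le> x \<Longrightarrow> 0 \<le> y \<Longrightarrow> approx_midpoints d x y"
begin

definition excess :: "real \<Rightarrow> real" where
  "excess t = d 0 t + d t 1 - d 0 1"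

lemma excess_nonneg: "0 \<le> t \<Longrightarrow> 0 \<le> excess t"
  using triangle[of 0 t 1] by (simp add: excess_def)

lemma continuous_on_excess: "continuous_on {0..} excess"
  unfolding continuous_on_def
proof
  fix t :: real assume t: "t \<in> {0..}"
  have "\<forall>\<^sub>F w in at t within {0..}. norm (excess w - excess t) \<le> 2 * d w t"
    unfolding eventually_at_filter
  proof (intro always_eventually allI impI)
    fix w :: real assume "w \<in> {0..}"
    then show "norm (excess w - excess t) \<le> 2 * d w t"
      using t triangle[of 0 w t] triangle[of 0 t w] triangle[of w t 1] triangle[of t w 1] commute[of w t]
      unfolding excess_def real_norm_def abs_le_iff by simp
  qed
  moreover have "((\<lambda>w. 2 * d w t) \<longlongrightarrow> 0) (at t within {0..})"
    using tendsto_mult_right_zero[OF tendsto_dist] t by auto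
  ultimately show "(excess \<longlongrightarrow> excess t) (at t within {0..})"
    by (rule Lim_null_comparison[THEN LIM_zero_cancel])
qed

lemma excess_zero_if_approximated:
  assumes v: "0 \<le> v"
    and approx: "\<And>\<epsilon>. 0 < \<epsilon> \<Longrightarrow> \<exists>u\<ge>0. \<bar>u - v\<bar> \<le> \<epsilon> \<and> excess (u powr (1 / a)) \<le> \<epsilon>"
  shows "excess (v powr (1 / a)) = 0"
proof (rule ccontr)
  define G where "G u = excess (u powr (1 / a))" for u
  assume "excess (v powr (1 / a)) \<noteq> 0"
  then have Gv: "0 < G v" using excess_nonneg[of "v powr (1 / a)"] by (simp add: G_def)
  have "continuous_on {0..} G"
    unfolding G_def using a_pos
    by (intro continuous_on_compose2[OF continuous_on_excess] continuous_on_powr') (auto intro: continuous_intros)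
  then obtain \<delta> where \<delta>: "0 < \<delta>" "\<And>u. u \<in> {0..} \<Longrightarrow> dist u v < \<delta> \<Longrightarrow> dist (G u) (G v) < G v / 2"
    using v Gv unfolding continuous_on_iff by (metis atLeast_iff half_gt_zero)
  obtain u where u: "0 \<le> u" "\<bar>u - v\<bar> \<le> min (\<delta> / 2) (G v / 4)" "G u \<le> min (\<delta> / 2) (G v / 4)"
    using approx[of "min (\<delta> / 2) (G v / 4)"] \<delta>(1) Gv by (auto simp: G_def)
  then have "\<bar>G u - G v\<bar> < G v / 2"
    using \<delta> by (simp add: dist_real_def)
  with u(3) show False by linarith
qed

text \<open>The hypothesis on \<open>d x y\<close> holds for \<open>u = 0\<close> by homogeneity, and for \<open>v = 1\<close> whenever
  \<open>u\<close> is itself on the segment; these are the two bisection steps below.\<close>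

lemma excess_zero_midpoint:
  assumes uv: "0 \<le> u" "0 \<le> v"
    and on_segment: "excess (v powr (1 / a)) = 0"
    and dist_uv: "d (u powr (1 / a)) (v powr (1 / a)) = d 0 1 * (v - u)"
  shows "excess (((u + v) / 2) powr (1 / a)) = 0"
proof (rule excess_zero_if_approximated)
  show "0 \<le> (u + v) / 2" using uv by simp
  define x y c where "x = u powr (1 / a)" and "y = v powr (1 / a)" and "c = d 0 1"
  have xy: "0 \<le> x" "0 \<le> y" "d 0 x = u * c" "d 0 y = v * c" "d x y = c * (v - u)" "d y 1 = c - v * c"
    using uv dist_uv on_segment zero_left[of x] zero_left[of y] by (auto simp: x_def y_def c_def excess_def)
  fix \<epsilon> :: real assume "0 < \<epsilon>"
  define \<epsilon>' where "\<epsilon>' = min (\<epsilon> / 2) (\<epsilon> * c)"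
  have "0 < \<epsilon>'" using \<open>0 < \<epsilon>\<close> zero_one_pos by (simp add: \<epsilon>'_def c_def)
  then obtain \<theta> where \<theta>: "0 \<le> \<theta>" "\<bar>d x \<theta> - d x y / 2\<bar> \<le> \<epsilon>'" "\<bar>d \<theta> y - d x y / 2\<bar> \<le> \<epsilon>'"
    using midpoints[OF xy(1,2)] unfolding approx_midpoints_def by blast
  have tri: "d 0 \<theta> \<le> d 0 x + d x \<theta>" "d 0 y \<le> d 0 \<theta> + d \<theta> y" "d \<theta> 1 \<le> d \<theta> y + d y 1"
    using xy(1,2) \<theta>(1) by (auto intro: triangle)
  have "\<bar>\<theta> powr a - (u + v) / 2\<bar> * c = \<bar>\<theta> powr a * c - (u + v) / 2 * c\<bar>"
    using zero_one_pos by (simp only: c_def abs_mult_pos left_diff_distrib less_imp_le)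
  also have "\<dots> \<le> \<epsilon> * c"
    using tri \<theta> xy zero_left[OF \<theta>(1)] unfolding c_def[symmetric] \<epsilon>'_def by (simp add: field_simps abs_le_iff)
  finally have "\<bar>\<theta> powr a - (u + v) / 2\<bar> \<le> \<epsilon>"
    using zero_one_pos by (simp add: c_def)
  moreover have "excess \<theta> \<le> \<epsilon>"
    using tri \<theta> xy unfolding excess_def c_def[symmetric] \<epsilon>'_def by (simp add: field_simps abs_le_iff)
  ultimately show "\<exists>w\<ge>0. \<bar>w - (u + v) / 2\<bar> \<le> \<epsilon> \<and> excess (w powr (1 / a)) \<le> \<epsilon>"
    using \<theta>(1) by (intro exI[of _ "\<theta> powr a"]) simp
qed

lemma excess_zero_dense:
  "\<forall>u\<in>{0..1}. \<exists>v\<in>{0..1}. \<bar>v - u\<bar> \<le> (1 / 2) ^ n \<and> excess (v powr (1 / a)) = 0"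
proof (induction n)
  case 0
  show ?case by (intro ballI bexI[of _ 0]) (auto simp: excess_def)
next
  case (Suc n)
  show ?case
  proof
    fix u :: real assume u: "u \<in> {0..1}"
    show "\<exists>v\<in>{0..1}. \<bar>v - u\<bar> \<le> (1 / 2) ^ Suc n \<and> excess (v powr (1 / a)) = 0"
    proof (cases "u \<le> 1 / 2")
      case True
      with u have "2 * u \<in> {0..1}" by auto
      then obtain v where v: "v \<in> {0..1}" "\<bar>v - 2 * u\<bar> \<le> (1 / 2) ^ n" "excess (v powr (1 / a)) = 0"
        using Suc.IH by blast
      have "excess (((0 + v) / 2) powr (1 / a)) = 0"
        using v zero_left[of "v powr (1 / a)"] by (intro excess_zero_midpoint) auto
      moreover have "\<bar>v / 2 - u\<bar> \<le> (1 / 2) ^ Suc n"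
        using v(2) unfolding abs_le_iff power_Suc by linarith
      ultimately show ?thesis using v(1) by (intro bexI[of _ "v / 2"]) auto
    next
      case False
      with u have "2 * u - 1 \<in> {0..1}" by auto
      then obtain v where v: "v \<in> {0..1}" "\<bar>v - (2 * u - 1)\<bar> \<le> (1 / 2) ^ n" "excess (v powr (1 / a)) = 0"
        using Suc.IH by blast
      have "excess (((v + 1) / 2) powr (1 / a)) = 0"
        using v zero_left[of "v powr (1 / a)"]
        by (intro excess_zero_midpoint) (auto simp: excess_def algebra_simps)
      moreover have "\<bar>(v + 1) / 2 - u\<bar> \<le> (1 / 2) ^ Suc n"
        using v(2) unfolding abs_le_iff power_Suc add_divide_distrib by linarith
      ultimately show ?thesis using v(1) by (intro bexI[of _ "(v + 1) / 2"]) auto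
    qed
  qed
qed

lemma excess_eq_0:
  assumes t: "0 \<le> t" "t \<le> 1"
  shows "excess t = 0"
proof -
  have "excess ((t powr a) powr (1 / a)) = 0"
  proof (rule excess_zero_if_approximated)
    fix \<epsilon> :: real assume "0 < \<epsilon>"
    then obtain n where "(1 / 2) ^ n < \<epsilon>" using real_arch_pow_inv[of \<epsilon> "1 / 2"] by auto
    moreover have "t powr a \<in> {0..1}" using t a_pos by (simp add: powr_le1)
    ultimately show "\<exists>v\<ge>0. \<bar>v - t powr a\<bar> \<le> \<epsilon> \<and> excess (v powr (1 / a)) \<le> \<epsilon>"
      using excess_zero_dense[of n] \<open>0 < \<epsilon>\<close> by fastforce
  qed simp
  with t show ?thesis by simp
qed

lemma dist_one:
  assumes "0 \<le> s"
  shows "d s 1 = d 0 1 * \<bar>s powr a - 1\<bar>"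
proof (cases "s \<le> 1")
  case True
  then have "s powr a \<le> 1" using assms a_pos by (simp add: powr_le1)
  then show ?thesis
    using excess_eq_0[OF assms True] zero_left[OF assms] by (simp add: excess_def algebra_simps)
next
  case False
  then have "d s 1 = s powr a * d (1 / s) 1"
    using homogeneous[of s 1 "1 / s"] commute[of 1 "1 / s"] by simp
  also have "d (1 / s) 1 = d 0 1 * (1 - (1 / s) powr a)"
    using excess_eq_0[of "1 / s"] zero_left[of "1 / s"] False by (simp add: excess_def algebra_simps)
  also have "s powr a * (d 0 1 * (1 - (1 / s) powr a)) = d 0 1 * (s powr a - 1)"
    using False by (simp add: powr_divide field_simps)
  finally show ?thesis using False a_pos ge_one_powr_ge_zero[of s a] by simp
qed

end

section \<open>Fixed points of \<open>T_a\<close>\<close>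

lemma margH_lessE:
  assumes "margH F r1 r2 < c" "0 < e"
  obtains q1 q2 \<theta> where "0 \<le> q1" "0 \<le> q2" "\<bar>q1 - r1\<bar> < e" "\<bar>q2 - r2\<bar> < e" "0 < \<theta>"
    "persp F \<theta> q1 + persp F \<theta> q2 < c"
proof -
  define Q where "Q = {q. fst q \<ge> 0 \<and> snd q \<ge> 0 \<and> dist q (r1, r2) < e}"
  have "(INF q\<in>Q. tildeH F (fst q) (snd q)) \<le> margH F r1 r2"
    unfolding margH_def Q_def using assms(2) by (intro SUP_upper) auto
  then obtain q where q: "q \<in> Q" "tildeH F (fst q) (snd q) < c"
    using assms(1) unfolding INF_less_iff by (meson INF_less_iff order.strict_trans1)
  then obtain \<theta> where "0 < \<theta>" "persp F \<theta> (fst q) + persp F \<theta> (snd q) < c"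
    unfolding tildeH_def INF_less_iff greaterThan_iff by blast
  moreover have "0 \<le> fst q" "0 \<le> snd q" "\<bar>fst q - r1\<bar> < e" "\<bar>snd q - r2\<bar> < e"
    using q(1) dist_fst_le[of q "(r1, r2)"] dist_snd_le[of q "(r1, r2)"]
    by (auto simp: Q_def dist_real_def)
  ultimately show ?thesis using that by blast
qed

locale Ta_fixed_point =
  fixes F :: "real \<Rightarrow> ereal" and a :: real
  assumes Gamma0: "F \<in> Gamma0"
    and a_pos: "0 < a" and a_less_1: "a < 1"
    and metric: "persp_pow_metric F a"
    and fixed_point: "\<And>s. 0 \<le> s \<Longrightarrow> Ta a F s = F s"
begin

definition f :: "real \<Rightarrow> real" where
  "f x = real_of_ereal (F x)"

definition D :: "real \<Rightarrow> real \<Rightarrow> real" where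
  "D x y = real_of_ereal (persp F x y)"

definition d :: "real \<Rightarrow> real \<Rightarrow> real" where
  "d x y = D x y powr a"

lemma F_nonneg: "0 \<le> x \<Longrightarrow> 0 \<le> F x"
  and F_one: "F 1 = 0"
  and F_convex: "convex_ext_on {0..} F"
  using Gamma0 by (auto simp: Gamma0_def)

lemma persp_finite: "0 \<le> x \<Longrightarrow> 0 \<le> y \<Longrightarrow> \<bar>persp F x y\<bar> \<noteq> \<infinity>"
  using metric by (simp add: persp_pow_metric_def)

lemma persp_eq: "0 \<le> x \<Longrightarrow> 0 \<le> y \<Longrightarrow> persp F x y = ereal (D x y)"
  using persp_finite by (simp add: D_def ereal_real)

lemma F_eq: "0 \<le> x \<Longrightarrow> F x = ereal (f x)"
  using persp_finite[of x 1] by (simp add: persp_def f_def ereal_real)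

lemma f_nonneg: "0 \<le> x \<Longrightarrow> 0 \<le> f x"
  using F_nonneg F_eq by force

lemma f_one: "f 1 = 0"
  using F_one by (simp add: f_def)

lemma D_pos: "0 \<le> x \<Longrightarrow> 0 < y \<Longrightarrow> D x y = y * f (x / y)"
  by (simp add: D_def persp_def F_eq)

lemma f_convex:
  assumes "0 \<le> x" "0 \<le> y" "0 \<le> t" "t \<le> 1"
  shows "f ((1 - t) * x + t * y) \<le> (1 - t) * f x + t * f y"
proof -
  have "F ((1 - t) * x + t * y) \<le> ereal (1 - t) * F x + ereal t * F y"
    using F_convex assms by (auto simp: convex_ext_on_def)
  moreover have "0 \<le> (1 - t) * x + t * y" using assms by simp
  ultimately show ?thesis using assms by (simp add: F_eq)
qed

lemma slope_mono:
  assumes "0 \<le> x" "0 < \<alpha>" "\<alpha> \<le> \<beta>"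
  shows "f (1 + \<alpha> * x) / \<alpha> \<le> f (1 + \<beta> * x) / \<beta>"
proof -
  have arg: "(1 - \<alpha> / \<beta>) * 1 + \<alpha> / \<beta> * (1 + \<beta> * x) = 1 + \<alpha> * x"
    using assms by (simp add: field_simps)
  have "f ((1 - \<alpha> / \<beta>) * 1 + \<alpha> / \<beta> * (1 + \<beta> * x)) \<le> (1 - \<alpha> / \<beta>) * f 1 + \<alpha> / \<beta> * f (1 + \<beta> * x)"
    using assms by (intro f_convex) auto
  then have "f (1 + \<alpha> * x) \<le> \<alpha> / \<beta> * f (1 + \<beta> * x)"
    by (simp only: arg f_one)
  then show ?thesis using assms by (simp add: field_simps)
qed

lemma recF_eq_SUP:
  assumes x: "0 \<le> x"
  shows "recF F x = (SUP \<alpha>\<in>{0<..}. ereal (f (1 + \<alpha> * x) / \<alpha>))"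
proof -
  define L where "L = (SUP \<alpha>\<in>{0<..}. ereal (f (1 + \<alpha> * x) / \<alpha>))"
  have slope_eq: "F (1 + \<alpha> * x) / ereal \<alpha> = ereal (f (1 + \<alpha> * x) / \<alpha>)" if "0 < \<alpha>" for \<alpha>
    using that x by (simp add: F_eq)
  have "((\<lambda>\<alpha>. F (1 + \<alpha> * x) / ereal \<alpha>) \<longlongrightarrow> L) at_top"
  proof (rule order_tendstoI)
    fix y assume "y < L"
    then obtain \<alpha>0 where \<alpha>0: "0 < \<alpha>0" "y < ereal (f (1 + \<alpha>0 * x) / \<alpha>0)"
      unfolding L_def less_SUP_iff by auto
    show "\<forall>\<^sub>F \<alpha> in at_top. y < F (1 + \<alpha> * x) / ereal \<alpha>"
      using eventually_ge_at_top[of \<alpha>0]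
    proof eventually_elim
      case (elim \<alpha>)
      then show ?case
        using \<alpha>0 slope_mono[OF x \<alpha>0(1) elim] slope_eq[of \<alpha>] by (simp add: order.strict_trans2)
    qed
  next
    fix y assume "L < y"
    show "\<forall>\<^sub>F \<alpha> in at_top. F (1 + \<alpha> * x) / ereal \<alpha> < y"
      using eventually_gt_at_top[of 0]
    proof eventually_elim
      case (elim \<alpha>)
      have "ereal (f (1 + \<alpha> * x) / \<alpha>) \<le> L" unfolding L_def using elim by (intro SUP_upper) auto
      then show ?case using slope_eq[OF elim] \<open>L < y\<close> by simp
    qed
  qed
  then show ?thesis unfolding recF_def L_def by (rule tendsto_Lim[rotated]) simp
qed

lemma recF_nonneg:
  assumes "0 \<le> x"
  shows "0 \<le> recF F x"
proof -
  have "ereal (f (1 + 1 * x) / 1) \<le> recF F x"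
    unfolding recF_eq_SUP[OF assms] by (intro SUP_upper) auto
  moreover have "0 \<le> f (1 + 1 * x) / 1" using assms f_nonneg by simp
  ultimately show ?thesis by (metis ereal_less_eq(5) order_trans)
qed

lemma D_nonneg:
  assumes "0 \<le> x" "0 \<le> y"
  shows "0 \<le> D x y"
proof (cases "y = 0")
  case True
  then show ?thesis using recF_nonneg[OF assms(1)] by (simp add: D_def persp_def real_of_ereal_pos)
qed (use assms in \<open>simp add: D_pos f_nonneg\<close>)

text \<open>\<open>powr\<close> of a negative base is junk, so this inversion needs \<open>D_nonneg\<close>, and with it
  the nonnegativity of \<open>recF\<close> at the boundary \<open>y = 0\<close>.\<close>

lemma D_eq_d_powr: "0 \<le> x \<Longrightarrow> 0 \<le> y \<Longrightarrow> D x y = d x y powr (1 / a)"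
  using D_nonneg a_pos by (simp add: d_def powr_powr)

lemma d_metric: "metric_on_nonneg d"
  using metric by (simp add: persp_pow_metric_def d_def[abs_def] D_def[abs_def])

lemma d_homogeneous:
  assumes l: "0 < l" and xy: "0 \<le> x" "0 \<le> y"
  shows "d (l * x) (l * y) = l powr a * d x y"
proof -
  have scale: "d (l * u) (l * v) = l powr a * d u v" if "0 \<le> u" "0 < v" for u v
    using l that D_nonneg[OF that(1)] by (simp add: d_def D_pos powr_mult)
  have sym: "d u v = d v u" if "0 \<le> u" "0 \<le> v" for u v
    using d_metric that unfolding metric_on_nonneg_def by blast
  consider "0 < y" | "y = 0" "0 < x" | "y = 0" "x = 0" using xy by linarith
  then show ?thesis
  proof cases
    case 1
    then show ?thesis using scale xy by blast
  next
    case 2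
    then show ?thesis using scale[of 0 x] sym[of "l * x" 0] sym[of x 0] l by simp
  next
    case 3
    then show ?thesis using d_metric unfolding metric_on_nonneg_def by simp
  qed
qed

lemma f_continuous_at_one: "isCont f 1"
proof -
  have "convex_on {0<..} f"
    using f_convex by (intro convex_onI) (auto simp: convex_real_interval)
  then have "continuous_on {0<..} f"
    by (rule convex_on_continuous[OF open_greaterThan])
  then show ?thesis
    by (simp add: continuous_on_eq_continuous_at)
qed

lemma d_continuous:
  assumes "0 < z"
  shows "((\<lambda>w. d w z) \<longlongrightarrow> 0) (at z)"
proof -
  have pos: "\<forall>\<^sub>F w in at z. 0 < w"
    using order_tendstoD(1)[OF tendsto_ident_at assms] .
  have "((\<lambda>w. f (w / z)) \<longlongrightarrow> f 1) (at z)"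
    using assms by (intro isCont_tendsto_compose[OF f_continuous_at_one]) (auto intro!: tendsto_eq_intros)
  then have "((\<lambda>w. z * f (w / z)) \<longlongrightarrow> 0) (at z)"
    by (simp add: f_one tendsto_mult_right_zero)
  moreover have "\<forall>\<^sub>F w in at z. z * f (w / z) = D w z"
    using pos by eventually_elim (use assms in \<open>simp add: D_pos less_imp_le\<close>)
  ultimately have "((\<lambda>w. D w z) \<longlongrightarrow> 0) (at z)"
    by (rule Lim_transform_eventually)
  then show ?thesis
    unfolding d_def using a_pos pos assms
    by (intro tendsto_zero_powrI) (auto elim!: eventually_mono intro!: D_nonneg)
qed

sublocale d: continuous_homogeneous_metric d a
  using d_metric a_pos d_homogeneous d_continuous by unfold_locales auto

lemma margH_one:
  assumes s: "0 \<le> s"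
  shows "margH F 1 s = ereal (2 * (d 1 s / 2) powr (1 / a))"
proof -
  define A where "A = d 1 s"
  have "0 \<le> A" using s by (simp add: A_def d.nonneg)
  have "f s = A powr (1 / a)"
    using s D_pos[of s 1] D_eq_d_powr[of s 1] d.commute[of s 1] by (simp add: A_def)
  then have "ereal (2 powr (1 / a - 1)) * margH F 1 s = ereal (A powr (1 / a))"
    using fixed_point[OF s] F_eq[OF s] by (simp add: Ta_def)
  moreover have "A powr (1 / a) = 2 powr (1 / a - 1) * (2 * (A / 2) powr (1 / a))"
    using \<open>0 \<le> A\<close> by (simp add: powr_divide powr_diff)
  ultimately show ?thesis
    by (cases "margH F 1 s") (auto simp: A_def)
qed

lemma margH_one_nearly_attained:
  assumes s: "0 \<le> s" and "0 < \<delta>" "0 < \<zeta>"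
  obtains \<theta> q1 q2 where "0 \<le> \<theta>" "0 \<le> q1" "0 \<le> q2" "d q1 1 < \<zeta>" "d q2 s < \<zeta>"
    "d \<theta> q1 powr (1 / a) + d \<theta> q2 powr (1 / a) \<le> 2 * (d 1 s / 2) powr (1 / a) + \<delta>"
proof -
  obtain e1 where e1: "0 < e1" "\<And>w. 0 \<le> w \<Longrightarrow> \<bar>w - 1\<bar> < e1 \<Longrightarrow> d w 1 < \<zeta>"
    using d.dist_small_near[OF _ \<open>0 < \<zeta>\<close>, of 1] by auto
  obtain e2 where e2: "0 < e2" "\<And>w. 0 \<le> w \<Longrightarrow> \<bar>w - s\<bar> < e2 \<Longrightarrow> d w s < \<zeta>"
    using d.dist_small_near[OF s \<open>0 < \<zeta>\<close>] by auto
  have "margH F 1 s < ereal (2 * (d 1 s / 2) powr (1 / a) + \<delta>)"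
    using margH_one[OF s] \<open>0 < \<delta>\<close> by simp
  then obtain q1 q2 \<theta> where q: "0 \<le> q1" "0 \<le> q2" "\<bar>q1 - 1\<bar> < min e1 e2" "\<bar>q2 - s\<bar> < min e1 e2"
    "0 < \<theta>" "persp F \<theta> q1 + persp F \<theta> q2 < ereal (2 * (d 1 s / 2) powr (1 / a) + \<delta>)"
    by (rule margH_lessE[where e = "min e1 e2"]) (use e1 e2 in simp_all)
  show ?thesis
  proof (rule that[of \<theta> q1 q2])
    show "d \<theta> q1 powr (1 / a) + d \<theta> q2 powr (1 / a) \<le> 2 * (d 1 s / 2) powr (1 / a) + \<delta>"
      using q persp_eq[of \<theta> q1] persp_eq[of \<theta> q2] D_eq_d_powr[of \<theta> q1] D_eq_d_powr[of \<theta> q2] by simp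
  qed (use e1 e2 q in auto)
qed

lemma approx_midpoints_one:
  assumes s: "0 \<le> s"
  shows "approx_midpoints d 1 s"
  unfolding approx_midpoints_def
proof (intro allI impI)
  fix \<epsilon> :: real assume "0 < \<epsilon>"
  define A where "A = d 1 s"
  have A: "0 \<le> A" using s by (simp add: A_def d.nonneg)
  have p: "1 < 1 / a" using a_pos a_less_1 by simp
  obtain \<delta> where \<delta>: "0 < \<delta>" and stable: "\<And>x y. 0 \<le> x \<Longrightarrow> 0 \<le> y \<Longrightarrow> A - \<delta> \<le> x + y \<Longrightarrow>
      x powr (1 / a) + y powr (1 / a) \<le> 2 * (A / 2) powr (1 / a) + \<delta> \<Longrightarrow>
      \<bar>x - A / 2\<bar> \<le> \<epsilon> / 2 \<and> \<bar>y - A / 2\<bar> \<le> \<epsilon> / 2"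
    using powr_midpoint_stable[OF p A, of "\<epsilon> / 2"] \<open>0 < \<epsilon>\<close> by auto
  define \<zeta> where "\<zeta> = min (\<delta> / 2) (\<epsilon> / 2)"
  have "0 < \<zeta>" using \<delta> \<open>0 < \<epsilon>\<close> by (simp add: \<zeta>_def)
  then obtain \<theta> q1 q2 where q: "0 \<le> \<theta>" "0 \<le> q1" "0 \<le> q2" and near: "d q1 1 < \<zeta>" "d q2 s < \<zeta>"
    and sum: "d \<theta> q1 powr (1 / a) + d \<theta> q2 powr (1 / a) \<le> 2 * (A / 2) powr (1 / a) + \<delta>"
    using margH_one_nearly_attained[OF s \<delta>] unfolding A_def by blast
  define X Y where "X = d \<theta> q1" and "Y = d \<theta> q2"
  have XY: "0 \<le> X" "0 \<le> Y" using q by (simp_all add: X_def Y_def d.nonneg)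
  have tri: "d 1 \<theta> \<le> d q1 1 + X" "X \<le> d 1 \<theta> + d q1 1" "d \<theta> s \<le> Y + d q2 s"
    "Y \<le> d \<theta> s + d q2 s" "A \<le> d 1 \<theta> + d \<theta> s"
    using q s d.triangle[of 1 q1 \<theta>] d.triangle[of \<theta> 1 q1] d.triangle[of \<theta> q2 s] d.triangle[of \<theta> s q2]
      d.triangle[of 1 \<theta> s] d.commute[of 1 q1] d.commute[of s q2] d.commute[of \<theta> 1] d.commute[of \<theta> q1]
    by (simp_all add: X_def Y_def A_def)
  then have "\<bar>X - A / 2\<bar> \<le> \<epsilon> / 2 \<and> \<bar>Y - A / 2\<bar> \<le> \<epsilon> / 2"
    using stable[OF XY] sum near unfolding X_def Y_def \<zeta>_def by linarith
  with near tri have "\<bar>d 1 \<theta> - A / 2\<bar> \<le> \<epsilon>" "\<bar>d \<theta> s - A / 2\<bar> \<le> \<epsilon>"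
    unfolding \<zeta>_def abs_le_iff by linarith+
  with q(1) show "\<exists>\<theta>\<ge>0. \<bar>d 1 \<theta> - d 1 s / 2\<bar> \<le> \<epsilon> \<and> \<bar>d \<theta> s - d 1 s / 2\<bar> \<le> \<epsilon>"
    unfolding A_def by blast
qed

sublocale d: homogeneous_length_metric d a
  by unfold_locales (blast intro: d.approx_midpoints_from_one approx_midpoints_one)

lemma F_closed_form:
  assumes "0 \<le> s"
  shows "F s = ereal (d 0 1 powr (1 / a) * \<bar>s powr a - 1\<bar> powr (1 / a))"
proof -
  have "f s = (d 0 1 * \<bar>s powr a - 1\<bar>) powr (1 / a)"
    using assms D_pos[of s 1] D_eq_d_powr[of s 1] d.dist_one[OF assms] by simp
  then show ?thesis
    using assms F_eq d.zero_one_pos by (simp add: powr_mult)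
qed

end

theorem mainTheorem7:
  fixes F :: "real \<Rightarrow> ereal" and a :: real
  assumes "F \<in> Gamma0s"
    and "0 < a" and "a < 1"
    and "persp_pow_metric F a"
    and "\<forall>s\<ge>0. Ta a F s = F s"
  shows "\<exists>c>0. \<forall>s\<ge>0. F s = ereal (c * \<bar>s powr a - 1\<bar> powr (1 / a))"
proof -
  interpret Ta_fixed_point F a
    using assms by unfold_locales (auto simp: Gamma0s_def)
  show ?thesis
    using F_closed_form d.zero_one_pos by (intro exI[of _ "d 0 1 powr (1 / a)"]) simp
qed

end
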